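(* For $i=1,\cdots,r$ let $\Theta_i\in H^\infty_{M_{n\times m_i}}$ be matrix inner functions, and let $\Theta\in H^\infty_{M_{n\times l}}$ be a least common multiple of $\{\Theta_1,\cdots,\Theta_r\}$, i.e. a matrix inner function with $\bigcap_{i=1}^r\Theta_iH^2_{\mathbb C^{m_i}}=\Theta H^2_{\mathbb C^l}$. Then $n-\sum_{i=1}^r(n-m_i)\le l\le\min\{m_1,\cdots,m_r\}$.
   Context: A matrix function $\Theta\in H^\infty_{M_{n\times m}}$ is inner if $\Theta(\zeta)^*\Theta(\zeta)=I$ for a.e. $\zeta$ on the unit circle; $H^2_{\mathbb C^m}$ is the space of column vectors of $m$ functions in the Hardy space $H^2$. *)

theory Defs
  imports "HOL-Analysis.Analysis"
begin

text \<open>Scalar functions on the unit disc are normalised to be 0 outside the open disc,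
so that sets of functions can be compared by equality.\<close>

definition H2 :: "(complex \<Rightarrow> complex) set" where
  "H2 = {f. f holomorphic_on ball 0 1 \<and> (\<forall>z. z \<notin> ball 0 1 \<longrightarrow> f z = 0) \<and>
        (\<exists>B. \<forall>\<rho>\<in>{0<..<1}. integral {0..2*pi} (\<lambda>t. (cmod (f (complex_of_real \<rho> * cis t)))\<^sup>2) \<le> B)}"

definition Hinf :: "(complex \<Rightarrow> complex) set" where
  "Hinf = {f. f holomorphic_on ball 0 1 \<and> (\<forall>z. z \<notin> ball 0 1 \<longrightarrow> f z = 0) \<and>
        bounded (f ` ball 0 1)}"

definition has_radial_limit :: "(complex \<Rightarrow> complex) \<Rightarrow> real \<Rightarrow> bool" where
  "has_radial_limit f t \<longleftrightarrow> (\<exists>L. ((\<lambda>\<rho>. f (complex_of_real \<rho> * cis t)) \<longlongrightarrow> L) (at_left 1))"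

definition bval :: "(complex \<Rightarrow> complex) \<Rightarrow> real \<Rightarrow> complex" where
  "bval f t = Lim (at_left 1) (\<lambda>\<rho>. f (complex_of_real \<rho> * cis t))"

text \<open>An n x m matrix function: entries Theta i j for i < n, j < m; zero elsewhere.\<close>
type_synonym matfun = "nat \<Rightarrow> nat \<Rightarrow> complex \<Rightarrow> complex"
type_synonym vecfun = "nat \<Rightarrow> complex \<Rightarrow> complex"

definition Hinf_mat :: "nat \<Rightarrow> nat \<Rightarrow> matfun set" where
  "Hinf_mat n m = {\<Theta>. \<forall>i j. (i < n \<and> j < m \<longrightarrow> \<Theta> i j \<in> Hinf) \<and>
                          (\<not> (i < n \<and> j < m) \<longrightarrow> \<Theta> i j = (\<lambda>_. 0))}"

definition inner_mat :: "nat \<Rightarrow> nat \<Rightarrow> matfun \<Rightarrow> bool" where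
  "inner_mat n m \<Theta> \<longleftrightarrow> \<Theta> \<in> Hinf_mat n m \<and>
     (AE t in lborel. (\<forall>i<n. \<forall>j<m. has_radial_limit (\<Theta> i j) t) \<and>
        (\<forall>j<m. \<forall>k<m. (\<Sum>i<n. cnj (bval (\<Theta> i j) t) * bval (\<Theta> i k) t) = (if j = k then 1 else 0)))"

definition H2vec :: "nat \<Rightarrow> vecfun set" where
  "H2vec m = {F. \<forall>j. (j < m \<longrightarrow> F j \<in> H2) \<and> (\<not> j < m \<longrightarrow> F j = (\<lambda>_. 0))}"

definition mat_range :: "nat \<Rightarrow> matfun \<Rightarrow> vecfun set" where
  "mat_range m \<Theta> = {(\<lambda>i z. \<Sum>k<m. \<Theta> i k z * F k z) | F. F \<in> H2vec m}"

end

theory Submission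
  imports Defs Jordan_Normal_Form.Determinant "HOL-Complex_Analysis.Complex_Analysis"
begin

text \<open>For the upper bound, an inner \<Theta> is injective at some point z of the disc, because near a
  boundary point the Gram matrix \<Theta>(z)^* \<Theta>(z) is close to the identity. Every column of \<Theta>(z)
  is the value at z of an element of \<Theta> H^2 \<subseteq> \<Theta>_i H^2, hence lies in the range of \<Theta>_i(z),
  and so l \<le> m_i.

  For the lower bound, choose for each i an m_i \<times> m_i minor D_i of \<Theta>_i that does not vanish
  identically. Its adjugate gives L_i with L_i \<Theta>_i = D_i, and wherever no D_i vanishes the kernel
  of the stacked matrix M = (\<Theta>_i L_i - D_i)_i is the intersection of the ranges of the \<Theta>_i(z).
  Counting dimensions, the rank s of M is at most r n - \<Sum> m_i. Taking s maximal on that open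
  set, the cofactor vectors of a nonsingular s \<times> s submatrix of M are n - s holomorphic kernel
  vectors that are independent at one point. Multiplied by \<Prod> D_i they belong to every
  \<Theta>_i H^2 (by analytic continuation), hence to \<Theta> H^2, and so n - s \<le> l.\<close>

section \<open>Linear algebra\<close>

lemma homogeneous_system_nontrivial_solution:
  fixes c :: "'i \<Rightarrow> 'j \<Rightarrow> 'a::field"
  assumes "finite A" "finite B" "card A < card B"
  shows "\<exists>x. (\<exists>b\<in>B. x b \<noteq> 0) \<and> (\<forall>a\<in>A. (\<Sum>b\<in>B. c a b * x b) = 0)"
  using assms
proof (induction A arbitrary: B c rule: finite_induct)
  case empty
  then obtain b where "b \<in> B" by fastforce
  then show ?case by (intro exI[of _ "\<lambda>_. 1"]) auto
next
  case (insert a A)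
  show ?case
  proof (cases "\<forall>b\<in>B. c a b = 0")
    case True
    have "card A < card B" using insert by simp
    then obtain x where x: "\<exists>b\<in>B. x b \<noteq> 0" "\<forall>a\<in>A. (\<Sum>b\<in>B. c a b * x b) = 0"
      using insert.IH[OF insert.prems(1)] by blast
    show ?thesis using x True by (intro exI[of _ x]) auto
  next
    case False
    \<comment> \<open>Eliminate the unknown b0 using equation a, and solve the smaller system.\<close>
    then obtain b0 where b0: "b0 \<in> B" "c a b0 \<noteq> 0" by blast
    define B' where "B' = B - {b0}"
    define c' where "c' a' b = c a' b - c a' b0 * c a b / c a b0" for a' b
    have "card A < card B'" using insert b0 unfolding B'_def by simp
    then obtain x where x: "\<exists>b\<in>B'. x b \<noteq> 0" "\<forall>a'\<in>A. (\<Sum>b\<in>B'. c' a' b * x b) = 0"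
      using insert.IH[of B' c'] insert.prems unfolding B'_def by auto
    define v where "v = - (\<Sum>b\<in>B'. c a b * x b) / c a b0"
    define y where "y b = (if b = b0 then v else x b)" for b
    have split_b0: "(\<Sum>b\<in>B. f b * y b) = f b0 * v + (\<Sum>b\<in>B'. f b * x b)" for f
    proof -
      have "(\<Sum>b\<in>B. f b * y b) = f b0 * y b0 + (\<Sum>b\<in>B'. f b * y b)"
        using b0 insert.prems unfolding B'_def by (simp add: sum.remove)
      also have "(\<Sum>b\<in>B'. f b * y b) = (\<Sum>b\<in>B'. f b * x b)"
        unfolding y_def B'_def by (intro sum.cong) auto
      finally show ?thesis by (simp add: y_def)
    qed
    have "\<exists>b\<in>B. y b \<noteq> 0" using x(1) unfolding y_def B'_def by auto
    moreover have "(\<Sum>b\<in>B. c a b * y b) = 0"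
      unfolding split_b0 using b0 by (simp add: v_def)
    moreover have "(\<Sum>b\<in>B. c a' b * y b) = 0" if "a' \<in> A" for a'
    proof -
      have "(\<Sum>b\<in>B. c a' b * y b) = (\<Sum>b\<in>B'. c' a' b * x b)"
        unfolding split_b0 c'_def v_def using b0
        by (simp add: algebra_simps sum_subtractf sum_distrib_left sum_divide_distrib)
      then show ?thesis using x(2) that by simp
    qed
    ultimately show ?thesis by auto
  qed
qed

lemma card_le_if_independent_in_span:
  fixes u :: "'c \<Rightarrow> 'r \<Rightarrow> 'a::field"
  assumes "finite C" "finite K"
    and span: "\<And>c a. c \<in> C \<Longrightarrow> u c a = (\<Sum>k\<in>K. T a k * h c k)"
    and independent: "\<And>y. (\<And>a. (\<Sum>c\<in>C. y c * u c a) = 0) \<Longrightarrow> \<forall>c\<in>C. y c = 0"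
  shows "card C \<le> card K"
proof (rule ccontr)
  assume "\<not> card C \<le> card K"
  then obtain y where y: "\<exists>c\<in>C. y c \<noteq> 0" "\<forall>k\<in>K. (\<Sum>c\<in>C. h c k * y c) = 0"
    using homogeneous_system_nontrivial_solution[of K C "\<lambda>k c. h c k"] assms(1,2) by auto
  have "(\<Sum>c\<in>C. y c * u c a) = 0" for a
  proof -
    have "(\<Sum>c\<in>C. y c * u c a) = (\<Sum>k\<in>K. T a k * (\<Sum>c\<in>C. h c k * y c))"
      by (simp add: span sum_distrib_left sum_distrib_right mult_ac sum.swap[of _ C])
    also have "\<dots> = 0" using y(2) by simp
    finally show ?thesis .
  qed
  then show False using independent y(1) by blast
qed

definition submat :: "('r \<Rightarrow> 'c \<Rightarrow> 'a) \<Rightarrow> 'r list \<Rightarrow> 'c list \<Rightarrow> 'a mat" where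
  "submat B I J = mat (length I) (length J) (\<lambda>(a, b). B (I ! a) (J ! b))"

definition square_selection :: "'r set \<Rightarrow> nat \<Rightarrow> 'r list \<Rightarrow> nat list \<Rightarrow> bool" where
  "square_selection R m I J \<longleftrightarrow>
     distinct I \<and> distinct J \<and> length J = length I \<and> set I \<subseteq> R \<and> set J \<subseteq> {..<m}"

definition nonsingular_submat ::
    "('r \<Rightarrow> nat \<Rightarrow> 'a::comm_ring_1) \<Rightarrow> 'r set \<Rightarrow> nat \<Rightarrow> 'r list \<Rightarrow> nat list \<Rightarrow> bool" where
  "nonsingular_submat B R m I J \<longleftrightarrow> square_selection R m I J \<and> det (submat B I J) \<noteq> 0"

lemma submat_carrier: "length I = q \<Longrightarrow> length J = q \<Longrightarrow> submat B I J \<in> carrier_mat q q"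
  unfolding submat_def by auto

lemma det_submat_Nil: "det (submat B [] []) = 1"
  unfolding submat_def det_def by simp

lemma square_selection_length_le: "square_selection R m I J \<Longrightarrow> length I \<le> m"
  unfolding square_selection_def
  by (metis card_lessThan card_mono distinct_card finite_lessThan)

lemma square_selection_full_columns:
  "square_selection R m I J \<Longrightarrow> length I = m \<Longrightarrow> set J = {..<m}"
  unfolding square_selection_def by (intro card_subset_eq) (auto simp: distinct_card)

lemma det_submat_repeated_row:
  assumes "\<rho> \<in> set I" "length J = Suc (length I)"
  shows "det (submat B (I @ [\<rho>]) J) = 0"
proof -
  obtain i where i: "i < length I" "I ! i = \<rho>" using assms(1) by (auto simp: in_set_conv_nth)
  have "submat B (I @ [\<rho>]) J \<in> carrier_mat (Suc (length I)) (Suc (length I))"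
    using assms(2) by (intro submat_carrier) auto
  then show ?thesis
    by (rule det_identical_rows[of _ _ i "length I"])
      (use i assms(2) in \<open>auto intro!: eq_vecI simp: submat_def nth_append Matrix.row_def\<close>)
qed

text \<open>Cofactors of the bottom row of the bordered submatrix with rows I @ [\<rho>] and columns
  J @ [c], spread out over the column indices (they do not depend on \<rho>).\<close>

definition cofactor_vec :: "('r \<Rightarrow> nat \<Rightarrow> 'a::comm_ring_1) \<Rightarrow> 'r list \<Rightarrow> nat list \<Rightarrow> nat \<Rightarrow> nat \<Rightarrow> 'a" where
  "cofactor_vec B I J c j = (\<Sum>b<Suc (length I). if (J @ [c]) ! b = j then
      (-1) ^ (length I + b) * det (mat (length I) (length I)
         (\<lambda>(i', j'). B (I ! i') ((J @ [c]) ! (if j' < b then j' else Suc j')))) else 0)"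

lemma cofactor_vec_outside:
  "j \<notin> set J \<Longrightarrow> j \<noteq> c \<Longrightarrow> length J = length I \<Longrightarrow> cofactor_vec B I J c j = 0"
  unfolding cofactor_vec_def
  by (intro sum.neutral ballI) (auto simp: nth_append split: if_splits)

lemma cofactor_vec_border:
  assumes "c \<notin> set J" "length J = length I"
  shows "cofactor_vec B I J c c = det (submat B I J)"
proof -
  let ?q = "length I"
  have "cofactor_vec B I J c c = (\<Sum>b\<in>{?q}. (-1) ^ (?q + b) * det (mat ?q ?q
         (\<lambda>(i', j'). B (I ! i') ((J @ [c]) ! (if j' < b then j' else Suc j')))))"
    unfolding cofactor_vec_def
    by (rule sum.mono_neutral_cong_right) (use assms in \<open>auto simp: nth_append split: if_splits\<close>)
  moreover have "mat ?q ?q (\<lambda>(i', j'). B (I ! i') ((J @ [c]) ! (if j' < ?q then j' else Suc j')))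
      = submat B I J"
    unfolding submat_def using assms by (intro eq_matI) (auto simp: nth_append)
  ultimately show ?thesis by (simp add: power_add[symmetric] mult_2[symmetric])
qed

lemma sum_mult_cofactor_vec:
  assumes "finite Cols" "set J \<subseteq> Cols" "c \<in> Cols" "distinct (J @ [c])" "length J = length I"
  shows "(\<Sum>j\<in>Cols. B \<rho> j * cofactor_vec B I J c j) = det (submat B (I @ [\<rho>]) (J @ [c]))"
proof -
  let ?q = "length I" and ?J = "J @ [c]"
  let ?A = "submat B (I @ [\<rho>]) ?J"
  have A: "?A \<in> carrier_mat (Suc ?q) (Suc ?q)" using assms(5) by (intro submat_carrier) auto
  have cofactor: "cofactor ?A ?q b = (-1) ^ (?q + b) * det (mat ?q ?q
         (\<lambda>(i', j'). B (I ! i') (?J ! (if j' < b then j' else Suc j'))))" if "b < Suc ?q" for b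
  proof -
    have "mat_delete ?A ?q b = mat ?q ?q (\<lambda>(i', j'). B (I ! i') (?J ! (if j' < b then j' else Suc j')))"
      unfolding mat_delete_def submat_def using assms(5) that by (intro eq_matI) (auto simp: nth_append)
    then show ?thesis unfolding cofactor_def by simp
  qed
  have col: "?J ! b \<in> Cols" if "b < Suc ?q" for b
    using assms(2,3,5) that by (auto simp: nth_append)
  have "det ?A = (\<Sum>b<Suc ?q. ?A $$ (?q, b) * cofactor ?A ?q b)"
    by (rule laplace_expansion_row[OF A]) simp
  also have "\<dots> = (\<Sum>b<Suc ?q. \<Sum>j\<in>Cols. if ?J ! b = j then B \<rho> j * cofactor ?A ?q b else 0)"
  proof (intro sum.cong refl)
    fix b assume "b \<in> {..<Suc ?q}"
    then show "?A $$ (?q, b) * cofactor ?A ?q b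
        = (\<Sum>j\<in>Cols. if ?J ! b = j then B \<rho> j * cofactor ?A ?q b else 0)"
      using assms(1,5) col[of b] unfolding submat_def by (simp add: nth_append)
  qed
  also have "\<dots> = (\<Sum>j\<in>Cols. \<Sum>b<Suc ?q. if ?J ! b = j then B \<rho> j * cofactor ?A ?q b else 0)"
    by (rule sum.swap)
  also have "\<dots> = (\<Sum>j\<in>Cols. B \<rho> j * cofactor_vec B I J c j)"
    unfolding cofactor_vec_def sum_distrib_left by (intro sum.cong refl) (auto simp: cofactor)
  finally show ?thesis by simp
qed

lemma cofactor_vec_in_kernel:
  assumes sel: "square_selection R m I J" and c: "c < m" "c \<notin> set J" and "\<rho> \<in> R"
    and maximal: "\<And>I' J'. nonsingular_submat B R m I' J' \<Longrightarrow> length I' \<le> length I"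
  shows "(\<Sum>k<m. B \<rho> k * cofactor_vec B I J c k) = 0"
proof -
  have "(\<Sum>k<m. B \<rho> k * cofactor_vec B I J c k) = det (submat B (I @ [\<rho>]) (J @ [c]))"
    using sel c by (intro sum_mult_cofactor_vec) (auto simp: square_selection_def)
  also have "\<dots> = 0"
  proof (cases "\<rho> \<in> set I")
    case True
    then show ?thesis using sel by (intro det_submat_repeated_row) (auto simp: square_selection_def)
  next
    case False
    then have "square_selection R m (I @ [\<rho>]) (J @ [c])"
      using sel c \<open>\<rho> \<in> R\<close> by (auto simp: square_selection_def)
    then show ?thesis using maximal[of "I @ [\<rho>]" "J @ [c]"] by (force simp: nonsingular_submat_def)
  qed
  finally show ?thesis .
qed

lemma injective_imp_nonsingular_submat:
  assumes inj: "\<And>x. \<forall>\<rho>\<in>R. (\<Sum>k<m. B \<rho> k * x k) = 0 \<Longrightarrow> \<forall>k<m. x k = 0"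
  shows "\<exists>I J. nonsingular_submat B R m I J \<and> length I = m"
proof -
  let ?P = "\<lambda>q. \<exists>I J. nonsingular_submat B R m I J \<and> length I = q"
  have "nonsingular_submat B R m [] []"
    by (simp add: nonsingular_submat_def square_selection_def det_submat_Nil)
  then have "?P 0" by blast
  moreover have "\<forall>q. ?P q \<longrightarrow> q \<le> m"
    unfolding nonsingular_submat_def using square_selection_length_le by blast
  ultimately have "\<exists>q. ?P q \<and> (\<forall>q'. ?P q' \<longrightarrow> q' \<le> q)"
    by (rule Nat.ex_has_greatest_nat)
  then obtain I J where IJ: "nonsingular_submat B R m I J"
    and maximal: "\<And>I' J'. nonsingular_submat B R m I' J' \<Longrightarrow> length I' \<le> length I"
    by blast
  then have sel: "square_selection R m I J" and det: "det (submat B I J) \<noteq> 0"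
    by (simp_all add: nonsingular_submat_def)
  have "length I = m"
  proof (rule ccontr)
    assume "length I \<noteq> m"
    moreover have "card (set J) = length I"
      using sel by (simp add: square_selection_def distinct_card)
    ultimately have "set J \<noteq> {..<m}" by force
    moreover have "set J \<subseteq> {..<m}" using sel by (simp add: square_selection_def)
    ultimately obtain c where c: "c < m" "c \<notin> set J" by blast
    have "(\<Sum>k<m. B \<rho> k * cofactor_vec B I J c k) = 0" if "\<rho> \<in> R" for \<rho>
      using sel c that maximal by (rule cofactor_vec_in_kernel)
    then have "cofactor_vec B I J c c = 0" using inj c(1) by blast
    moreover have "cofactor_vec B I J c c = det (submat B I J)"
      using sel c(2) by (intro cofactor_vec_border) (simp_all add: square_selection_def)
    ultimately show False using det by simp
  qed
  then show ?thesis using IJ by blast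
qed

lemma nonsingular_submat_kernel_trivial:
  fixes B :: "'r \<Rightarrow> nat \<Rightarrow> 'a::idom"
  assumes IJ: "nonsingular_submat B R n I J"
    and kernel: "\<forall>\<rho>\<in>R. (\<Sum>j<n. B \<rho> j * v j) = 0"
    and support: "\<And>j. j < n \<Longrightarrow> j \<notin> set J \<Longrightarrow> v j = 0"
  shows "\<forall>j<n. v j = 0"
proof -
  let ?q = "length I"
  let ?A = "submat B I J" and ?u = "vec ?q (\<lambda>b. v (J ! b))"
  have sel: "distinct J" "length J = ?q" "set I \<subseteq> R" "set J \<subseteq> {..<n}"
    using IJ by (auto simp: nonsingular_submat_def square_selection_def)
  have A: "?A \<in> carrier_mat ?q ?q" using sel by (intro submat_carrier) auto
  have "?A *\<^sub>v ?u = 0\<^sub>v ?q"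
  proof (rule eq_vecI)
    fix a assume "a < dim_vec (0\<^sub>v ?q :: 'a vec)"
    then have a: "a < ?q" by simp
    have "(?A *\<^sub>v ?u) $ a = (\<Sum>b<?q. B (I ! a) (J ! b) * v (J ! b))"
      using a sel unfolding submat_def by (simp add: scalar_prod_def lessThan_atLeast0)
    also have "\<dots> = (\<Sum>j\<in>set J. B (I ! a) j * v j)"
      using sum.reindex_bij_betw[OF bij_betw_nth[OF sel(1) refl refl], of "\<lambda>j. B (I ! a) j * v j"]
      by (simp add: sel(2) lessThan_atLeast0)
    also have "\<dots> = (\<Sum>j<n. B (I ! a) j * v j)"
      using sel(4) support by (intro sum.mono_neutral_left) auto
    also have "\<dots> = 0" using kernel sel(3) a by (simp add: subset_iff)
    finally show "(?A *\<^sub>v ?u) $ a = 0\<^sub>v ?q $ a" using a by simp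
  qed (use A in simp)
  moreover have "det ?A \<noteq> 0" using IJ by (simp add: nonsingular_submat_def)
  ultimately have "?u = 0\<^sub>v ?q"
    using det_0_iff_vec_prod_zero[OF A] vec_carrier[of ?q] by blast
  have "v j = 0" if j: "j \<in> set J" for j
  proof -
    obtain b where b: "b < ?q" "J ! b = j"
      using j sel(2) by (auto simp: in_set_conv_nth)
    then have "v j = ?u $ b" by simp
    also have "\<dots> = 0" using \<open>?u = 0\<^sub>v ?q\<close> b(1) by simp
    finally show ?thesis .
  qed
  then show ?thesis using support by blast
qed

text \<open>Adjugate of the submatrix on I, J, padded with zeros to a left inverse of X up to the
  factor det (submat X I J).\<close>

definition adj_left_inverse :: "(nat \<Rightarrow> nat \<Rightarrow> 'a::comm_ring_1) \<Rightarrow> nat list \<Rightarrow> nat list \<Rightarrow> nat \<Rightarrow> nat \<Rightarrow> 'a" where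
  "adj_left_inverse X I J k j = (\<Sum>b'<length J. if J ! b' = k then
     (\<Sum>b<length I. if I ! b = j then adj_mat (submat X I J) $$ (b', b) else 0) else 0)"

lemma sum_sum_mult_assoc:
  fixes f :: "'k \<Rightarrow> 'a::comm_semiring_0"
  shows "(\<Sum>j\<in>A. (\<Sum>k\<in>K. f k * g k j) * h j) = (\<Sum>k\<in>K. f k * (\<Sum>j\<in>A. g k j * h j))"
  by (simp add: sum_distrib_left sum_distrib_right mult.assoc) (rule sum.swap)

lemma sum_scatter_list:
  fixes f :: "nat \<Rightarrow> 'a::semiring_0"
  assumes "distinct I" "set I \<subseteq> A" "finite A"
  shows "(\<Sum>j\<in>A. (\<Sum>b<length I. if I ! b = j then f b else 0) * g j) = (\<Sum>b<length I. f b * g (I ! b))"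
proof -
  have "(\<Sum>j\<in>A. (\<Sum>b<length I. if I ! b = j then f b else 0) * g j)
      = (\<Sum>b<length I. \<Sum>j\<in>A. if I ! b = j then f b * g j else 0)"
    unfolding sum_distrib_right mult_delta_left by (rule sum.swap)
  also have "\<dots> = (\<Sum>b<length I. f b * g (I ! b))"
    using assms(2,3) by (intro sum.cong refl) (auto simp: sum.delta dest: nth_mem)
  finally show ?thesis .
qed

lemma adj_left_inverse_mult:
  fixes X :: "nat \<Rightarrow> nat \<Rightarrow> 'a::comm_ring_1"
  assumes sel: "square_selection {..<n} m I J" "length I = m" and "k < m"
  shows "(\<Sum>j<n. adj_left_inverse X I J k j * (\<Sum>k'<m. X j k' * x k')) = det (submat X I J) * x k"
proof -
  let ?A = "submat X I J" and ?D = "det (submat X I J)"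
  let ?y = "\<lambda>j. \<Sum>k'<m. X j k' * x k'"
  have I: "distinct I" "set I \<subseteq> {..<n}" and J: "distinct J" "length J = m" "set J = {..<m}"
    using sel square_selection_full_columns[OF sel] by (auto simp: square_selection_def)
  have A: "?A \<in> carrier_mat m m" using sel J(2) by (intro submat_carrier) auto
  have row: "?y (I ! b) = (\<Sum>b''<m. ?A $$ (b, b'') * x (J ! b''))" if "b < m" for b
    using sum.reindex_bij_betw[OF bij_betw_nth[OF J(1) refl refl], of "\<lambda>k'. X (I ! b) k' * x k'"]
      that sel(2) J(2,3) by (simp add: submat_def)
  have adj_row: "(\<Sum>b<m. adj_mat ?A $$ (b', b) * ?y (I ! b)) = ?D * x (J ! b')" if "b' < m" for b'
  proof -
    have "(\<Sum>b<m. adj_mat ?A $$ (b', b) * ?y (I ! b))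
        = (\<Sum>b<m. \<Sum>b''<m. adj_mat ?A $$ (b', b) * ?A $$ (b, b'') * x (J ! b''))"
      by (intro sum.cong refl) (simp add: row sum_distrib_left mult.assoc)
    also have "\<dots> = (\<Sum>b''<m. (\<Sum>b<m. adj_mat ?A $$ (b', b) * ?A $$ (b, b'')) * x (J ! b''))"
      unfolding sum_distrib_right by (rule sum.swap)
    also have "\<dots> = (\<Sum>b''<m. (adj_mat ?A * ?A) $$ (b', b'') * x (J ! b''))"
      using A adj_mat(1)[OF A] that by (intro sum.cong refl) (simp add: scalar_prod_def atLeast0LessThan)
    also have "\<dots> = ?D * x (J ! b')"
      using adj_mat(3)[OF A] that by (simp add: mult_delta_left mult_delta_right)
    finally show ?thesis .
  qed
  obtain b0 where b0: "b0 < m" "J ! b0 = k" using \<open>k < m\<close> J by (metis in_set_conv_nth lessThan_iff)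
  have "(\<Sum>j<n. adj_left_inverse X I J k j * ?y j)
      = (\<Sum>b'<m. \<Sum>j<n. (if J ! b' = k then
          (\<Sum>b<m. if I ! b = j then adj_mat ?A $$ (b', b) else 0) else 0) * ?y j)"
    unfolding adj_left_inverse_def J(2) sel(2) sum_distrib_right by (rule sum.swap)
  also have "\<dots> = (\<Sum>b'<m. if J ! b' = k then ?D * x k else 0)"
  proof (rule sum.cong[OF refl])
    fix b' assume "b' \<in> {..<m}"
    then show "(\<Sum>j<n. (if J ! b' = k then
          (\<Sum>b<m. if I ! b = j then adj_mat ?A $$ (b', b) else 0) else 0) * ?y j)
        = (if J ! b' = k then ?D * x k else 0)"
      using sum_scatter_list[OF I finite_lessThan, of "\<lambda>b. adj_mat ?A $$ (b', b)" ?y]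
        adj_row[of b'] sel(2) by auto
  qed
  also have "\<dots> = (\<Sum>b'<m. if b' = b0 then ?D * x k else 0)"
    using b0 J(1,2) by (intro sum.cong refl) (auto simp: nth_eq_iff_index_eq)
  also have "\<dots> = ?D * x k" using b0 by simp
  finally show ?thesis .
qed

lemma adj_left_inverse_injective:
  fixes X :: "nat \<Rightarrow> nat \<Rightarrow> 'a::idom"
  assumes "square_selection {..<n} m I J" "length I = m" "det (submat X I J) \<noteq> 0"
    and kernel: "\<forall>a<n. (\<Sum>k<m. X a k * x k) = 0"
  shows "\<forall>k<m. x k = 0"
proof (intro allI impI)
  fix k assume "k < m"
  have "det (submat X I J) * x k = (\<Sum>j<n. adj_left_inverse X I J k j * (\<Sum>k'<m. X j k' * x k'))"
    using adj_left_inverse_mult[OF assms(1,2) \<open>k < m\<close>, where X = X and x = x] by simp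
  also have "\<dots> = 0" using kernel by simp
  finally show "x k = 0" using assms(3) by simp
qed

text \<open>X L - det (submat X I J) \<cdot> 1: for a nonsingular submatrix its kernel is the range of X.\<close>

definition range_defect :: "(nat \<Rightarrow> nat \<Rightarrow> 'a::comm_ring_1) \<Rightarrow> nat list \<Rightarrow> nat list \<Rightarrow> nat \<Rightarrow> nat \<Rightarrow> 'a" where
  "range_defect X I J a j =
     (\<Sum>k<length J. X a k * adj_left_inverse X I J k j) - (if a = j then det (submat X I J) else 0)"

lemma range_defect_mult_range:
  fixes X :: "nat \<Rightarrow> nat \<Rightarrow> 'a::comm_ring_1"
  assumes sel: "square_selection {..<n} m I J" "length I = m" and "a < n"
  shows "(\<Sum>j<n. range_defect X I J a j * (\<Sum>k<m. X j k * x k)) = 0"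
proof -
  have m: "length J = m" using sel by (simp add: square_selection_def)
  have "(\<Sum>j<n. (\<Sum>k<m. X a k * adj_left_inverse X I J k j) * (\<Sum>k'<m. X j k' * x k'))
      = (\<Sum>k<m. X a k * (\<Sum>j<n. adj_left_inverse X I J k j * (\<Sum>k'<m. X j k' * x k')))"
    by (rule sum_sum_mult_assoc)
  also have "\<dots> = (\<Sum>k<m. X a k * (det (submat X I J) * x k))"
    by (intro sum.cong refl) (simp add: adj_left_inverse_mult[OF sel])
  also have "\<dots> = det (submat X I J) * (\<Sum>k<m. X a k * x k)"
    by (simp add: sum_distrib_left mult_ac)
  finally show ?thesis
    using \<open>a < n\<close> by (simp add: range_defect_def m left_diff_distrib sum_subtractf
        mult_delta_left)
qed

lemma range_defect_kernel:
  assumes "a < n" and "(\<Sum>j<n. range_defect X I J a j * w j) = 0"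
  shows "(\<Sum>k<length J. X a k * (\<Sum>j<n. adj_left_inverse X I J k j * w j)) = det (submat X I J) * w a"
proof -
  have "(\<Sum>k<length J. X a k * (\<Sum>j<n. adj_left_inverse X I J k j * w j))
      = (\<Sum>j<n. (\<Sum>k<length J. X a k * adj_left_inverse X I J k j) * w j)"
    by (rule sum_sum_mult_assoc[symmetric])
  then show ?thesis
    using assms by (simp add: range_defect_def left_diff_distrib sum_subtractf
        mult_delta_left)
qed

lemma gram_quadratic_form:
  fixes X :: "nat \<Rightarrow> nat \<Rightarrow> complex"
  shows "(\<Sum>j<m. \<Sum>k<m. cnj (x j) * x k * (\<Sum>a<n. cnj (X a j) * X a k))
       = (\<Sum>a<n. cnj (\<Sum>j<m. X a j * x j) * (\<Sum>k<m. X a k * x k))"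
proof -
  have "(\<Sum>j<m. \<Sum>k<m. cnj (x j) * x k * (\<Sum>a<n. cnj (X a j) * X a k))
      = (\<Sum>j<m. \<Sum>k<m. \<Sum>a<n. cnj (X a j * x j) * (X a k * x k))"
    by (simp add: sum_distrib_left mult_ac)
  also have "\<dots> = (\<Sum>j<m. \<Sum>a<n. \<Sum>k<m. cnj (X a j * x j) * (X a k * x k))"
    by (intro sum.cong refl sum.swap)
  also have "\<dots> = (\<Sum>a<n. \<Sum>j<m. \<Sum>k<m. cnj (X a j * x j) * (X a k * x k))"
    by (rule sum.swap)
  also have "\<dots> = (\<Sum>a<n. cnj (\<Sum>j<m. X a j * x j) * (\<Sum>k<m. X a k * x k))"
    by (simp only: sum_product cnj_sum)
  finally show ?thesis .
qed

text \<open>For X x = 0 the Gram form gives |x|^2 = -x^* (X^* X - 1) x \<le> \<epsilon> (\<Sum>|x_j|)^2 \<le> \<epsilon> m |x|^2.\<close>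

lemma injective_if_gram_near_identity:
  fixes X :: "nat \<Rightarrow> nat \<Rightarrow> complex"
  assumes near: "\<And>j k. j < m \<Longrightarrow> k < m \<Longrightarrow>
      cmod ((\<Sum>a<n. cnj (X a j) * X a k) - (if j = k then 1 else 0)) \<le> \<epsilon>"
    and small: "\<epsilon> * real m < 1"
    and kernel: "\<forall>a<n. (\<Sum>k<m. X a k * x k) = 0"
  shows "\<forall>k<m. x k = 0"
proof (cases "m = 0")
  case False
  define S where "S = (\<Sum>j<m. (cmod (x j))\<^sup>2)"
  define E where "E = (\<Sum>j<m. \<Sum>k<m. cnj (x j) * x k *
      ((\<Sum>a<n. cnj (X a j) * X a k) - (if j = k then 1 else 0)))"
  have "0 \<le> S" unfolding S_def by (simp add: sum_nonneg)
  have "0 \<le> \<epsilon>" using near[of 0 0] False by (auto intro: order_trans[OF norm_ge_zero])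
  have "(\<Sum>j<m. \<Sum>k<m. cnj (x j) * x k * (if j = k then 1 else 0)) = (\<Sum>j<m. cnj (x j) * x j)"
    by (simp add: mult_delta_right)
  also have "\<dots> = of_real S"
    unfolding S_def of_real_sum by (intro sum.cong refl) (simp only: complex_norm_square mult.commute)
  finally have diagonal: "(\<Sum>j<m. \<Sum>k<m. cnj (x j) * x k * (if j = k then 1 else 0)) = of_real S" .
  have "of_real S + E = (\<Sum>j<m. \<Sum>k<m. cnj (x j) * x k * (\<Sum>a<n. cnj (X a j) * X a k))"
    unfolding diagonal[symmetric] E_def sum.distrib[symmetric] by (simp add: algebra_simps)
  also have "\<dots> = 0"
    using kernel by (simp add: gram_quadratic_form)
  finally have "E = - of_real S" by (simp add: eq_neg_iff_add_eq_0 add.commute)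
  then have "S = cmod E" using \<open>0 \<le> S\<close> by simp
  also have "\<dots> \<le> (\<Sum>j<m. \<Sum>k<m. \<epsilon> * (cmod (x j) * cmod (x k)))"
    unfolding E_def
  proof (rule order_trans[OF norm_sum sum_mono[OF order_trans[OF norm_sum sum_mono]]])
    fix j k assume "j \<in> {..<m}" "k \<in> {..<m}"
    let ?d = "(\<Sum>a<n. cnj (X a j) * X a k) - (if j = k then 1 else 0)"
    have "cmod (cnj (x j) * x k * ?d) = (cmod (x j) * cmod (x k)) * cmod ?d"
      by (simp only: norm_mult complex_mod_cnj)
    also have "\<dots> \<le> (cmod (x j) * cmod (x k)) * \<epsilon>"
      using near[of j k] \<open>j \<in> {..<m}\<close> \<open>k \<in> {..<m}\<close> by (intro mult_left_mono) simp_all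
    finally show "cmod (cnj (x j) * x k * ?d) \<le> \<epsilon> * (cmod (x j) * cmod (x k))"
      by (simp only: mult.commute)
  qed
  also have "\<dots> = \<epsilon> * (\<Sum>j<m. cmod (x j))\<^sup>2"
    by (simp add: power2_eq_square sum_product flip: sum_distrib_left)
  also have "\<dots> \<le> \<epsilon> * (S * real m)"
    unfolding S_def using sum_squared_le_sum_of_squares[of "\<lambda>j. cmod (x j)" "{..<m}"] \<open>0 \<le> \<epsilon>\<close>
    by (intro mult_left_mono) simp_all
  finally have "S * (1 - \<epsilon> * real m) \<le> 0" by (simp add: algebra_simps)
  then have "S = 0"
    using small \<open>0 \<le> S\<close> by (simp add: mult_le_0_iff)
  then show ?thesis by (simp add: S_def sum_nonneg_eq_0_iff)
qed simp

lemma sum_Sigma_select_fst: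
  assumes "finite A" "\<And>i. i \<in> A \<Longrightarrow> finite (B i)" "i0 \<in> A"
  shows "(\<Sum>p\<in>Sigma A B. if fst p = i0 then f p else 0) = (\<Sum>k\<in>B i0. f (i0, k))"
proof -
  have "(\<Sum>p\<in>Sigma A B. if fst p = i0 then f p else 0)
      = (\<Sum>(i, k)\<in>Sigma A B. if i = i0 then f (i, k) else 0)"
    by (intro sum.cong refl) auto
  also have "\<dots> = (\<Sum>i\<in>A. \<Sum>k\<in>B i. if i = i0 then f (i, k) else 0)"
    by (rule sum.Sigma[symmetric]) (use assms(1,2) in auto)
  also have "\<dots> = (\<Sum>i\<in>A. if i = i0 then \<Sum>k\<in>B i. f (i, k) else 0)"
    by (intro sum.cong refl) simp
  also have "\<dots> = (\<Sum>k\<in>B i0. f (i0, k))"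
    using assms(1,3) by simp
  finally show ?thesis .
qed

lemma stacked_system_nontrivial_solution:
  fixes T :: "nat \<Rightarrow> nat \<Rightarrow> nat \<Rightarrow> 'a::field"
  assumes "0 < r" "C \<subseteq> {..<n}" and dim: "card C + (r - 1) * n < (\<Sum>i<r. m i)"
  shows "\<exists>x. (\<exists>i<r. \<exists>k<m i. x i k \<noteq> 0) \<and>
    (\<forall>i<r. \<forall>a<n. (\<Sum>k<m i. T i a k * x i k) = (\<Sum>k<m 0. T 0 a k * x 0 k)) \<and>
    (\<forall>a\<in>C. (\<Sum>k<m 0. T 0 a k * x 0 k) = 0)"
proof -
  define P where "P = Sigma {..<r} (\<lambda>i. {..<m i})"
  define E where "E = {0} \<times> C \<union> {1..<r} \<times> {..<n}"
  define coeff where "coeff e p = (if fst p = fst e then T (fst p) (snd e) (snd p) else 0)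
      - (if fst p = 0 \<and> fst e \<noteq> 0 then T 0 (snd e) (snd p) else 0)" for e p :: "nat \<times> nat"
  have "finite C" using \<open>C \<subseteq> {..<n}\<close> finite_subset by blast
  have "card E = card C + (r - 1) * n"
    unfolding E_def using \<open>finite C\<close> by (subst card_Un_disjoint) (auto simp: card_cartesian_product)
  moreover have "card P = (\<Sum>i<r. m i)" unfolding P_def by (simp add: card_SigmaI)
  ultimately obtain x where x: "\<exists>p\<in>P. x p \<noteq> 0" "\<forall>e\<in>E. (\<Sum>p\<in>P. coeff e p * x p) = 0"
    using homogeneous_system_nontrivial_solution[of E P coeff] dim \<open>finite C\<close>
    unfolding E_def P_def by auto
  define v where "v i a = (\<Sum>k<m i. T i a k * x (i, k))" for i a
  have select: "(\<Sum>p\<in>P. if fst p = i then g p else 0) = (\<Sum>k<m i. g (i, k))" if "i < r" for i g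
    unfolding P_def using that by (intro sum_Sigma_select_fst) auto
  have equation: "(\<Sum>p\<in>P. coeff (i, a) p * x p) = v i a - (if i \<noteq> 0 then v 0 a else 0)"
    if "i < r" for i a
  proof -
    have "(\<Sum>p\<in>P. coeff (i, a) p * x p) = (\<Sum>p\<in>P. if fst p = i then T i a (snd p) * x p else 0)
        - (if i \<noteq> 0 then (\<Sum>p\<in>P. if fst p = 0 then T 0 a (snd p) * x p else 0) else 0)"
      unfolding coeff_def left_diff_distrib sum_subtractf
      by (cases "i = 0") (simp_all add: mult_delta_left cong: if_cong)
    then show ?thesis
      using select[OF that, of "\<lambda>p. T i a (snd p) * x p"]
        select[OF \<open>0 < r\<close>, of "\<lambda>p. T 0 a (snd p) * x p"] by (simp add: v_def)
  qed
  show ?thesis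
  proof (intro exI[of _ "\<lambda>i k. x (i, k)"] conjI allI impI ballI)
    show "\<exists>i<r. \<exists>k<m i. x (i, k) \<noteq> 0" using x(1) unfolding P_def by auto
    fix i a assume "i < r" "a < n"
    show "(\<Sum>k<m i. T i a k * x (i, k)) = (\<Sum>k<m 0. T 0 a k * x (0, k))"
    proof (cases "i = 0")
      case False
      then have "(i, a) \<in> E" using \<open>i < r\<close> \<open>a < n\<close> unfolding E_def by auto
      then show ?thesis using x(2) equation[OF \<open>i < r\<close>, of a] False by (simp add: v_def)
    qed simp
  next
    fix a assume "a \<in> C"
    then have "(0, a) \<in> E" unfolding E_def by auto
    then show "(\<Sum>k<m 0. T 0 a k * x (0, k)) = 0"
      using x(2) equation[OF \<open>0 < r\<close>, of a] by (simp add: v_def)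
  qed
qed

lemma common_range_vector:
  fixes T :: "nat \<Rightarrow> nat \<Rightarrow> nat \<Rightarrow> 'a::field"
  assumes "0 < r"
    and inj: "\<And>i x. i < r \<Longrightarrow> \<forall>a<n. (\<Sum>k<m i. T i a k * x k) = 0 \<Longrightarrow> \<forall>k<m i. x k = 0"
    and "C \<subseteq> {..<n}" and dim: "card C + (r - 1) * n < (\<Sum>i<r. m i)"
  shows "\<exists>v. (\<exists>a<n. v a \<noteq> 0) \<and> (\<forall>a\<in>C. v a = 0) \<and>
      (\<forall>i<r. \<exists>x. \<forall>a<n. v a = (\<Sum>k<m i. T i a k * x k))"
proof -
  obtain x where x: "\<exists>i<r. \<exists>k<m i. x i k \<noteq> 0"
    "\<forall>i<r. \<forall>a<n. (\<Sum>k<m i. T i a k * x i k) = (\<Sum>k<m 0. T 0 a k * x 0 k)"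
    "\<forall>a\<in>C. (\<Sum>k<m 0. T 0 a k * x 0 k) = 0"
    using stacked_system_nontrivial_solution[where T = T, OF \<open>0 < r\<close> \<open>C \<subseteq> {..<n}\<close> dim] by blast
  define v where "v a = (\<Sum>k<m 0. T 0 a k * x 0 k)" for a
  have in_range: "v a = (\<Sum>k<m i. T i a k * x i k)" if "i < r" "a < n" for i a
    using x(2)[rule_format, OF that] unfolding v_def by simp
  have "\<exists>a<n. v a \<noteq> 0"
  proof (rule ccontr)
    assume "\<not> (\<exists>a<n. v a \<noteq> 0)"
    then have "x i k = 0" if "i < r" "k < m i" for i k
      using inj[of i "x i"] in_range that by simp
    then show False using x(1) by blast
  qed
  moreover have "\<forall>i<r. \<exists>y. \<forall>a<n. v a = (\<Sum>k<m i. T i a k * y k)"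
    using in_range by blast
  ultimately show ?thesis using x(3) by (intro exI[of _ v]) (simp add: v_def)
qed

section \<open>Bounded holomorphic functions\<close>

definition bounded_holomorphic_on :: "(complex \<Rightarrow> complex) \<Rightarrow> complex set \<Rightarrow> bool" where
  "bounded_holomorphic_on f S \<longleftrightarrow> f holomorphic_on S \<and> bounded (f ` S)"

lemma bounded_holomorphic_on_const: "bounded_holomorphic_on (\<lambda>z. c) S"
  unfolding bounded_holomorphic_on_def by (simp add: image_constant_conv)

lemma bounded_holomorphic_on_add:
  "bounded_holomorphic_on f S \<Longrightarrow> bounded_holomorphic_on g S \<Longrightarrow> bounded_holomorphic_on (\<lambda>z. f z + g z) S"
  unfolding bounded_holomorphic_on_def by (auto intro: holomorphic_intros bounded_plus_comp)

lemma bounded_holomorphic_on_diff: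
  "bounded_holomorphic_on f S \<Longrightarrow> bounded_holomorphic_on g S \<Longrightarrow> bounded_holomorphic_on (\<lambda>z. f z - g z) S"
  unfolding bounded_holomorphic_on_def by (auto intro: holomorphic_intros bounded_minus_comp)

lemma bounded_holomorphic_on_mult:
  assumes "bounded_holomorphic_on f S" "bounded_holomorphic_on g S"
  shows "bounded_holomorphic_on (\<lambda>z. f z * g z) S"
proof -
  obtain M N where "\<And>z. z \<in> S \<Longrightarrow> norm (f z) \<le> M" "\<And>z. z \<in> S \<Longrightarrow> norm (g z) \<le> N"
    using assms unfolding bounded_holomorphic_on_def bounded_iff by blast
  then have "norm (f z * g z) \<le> M * N" if "z \<in> S" for z
    unfolding norm_mult using that by (intro mult_mono) (auto intro: order_trans[OF norm_ge_zero])
  then show ?thesis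
    using assms unfolding bounded_holomorphic_on_def bounded_iff by (auto intro: holomorphic_intros)
qed

lemma bounded_holomorphic_on_sum:
  "(\<And>i. i \<in> A \<Longrightarrow> bounded_holomorphic_on (f i) S) \<Longrightarrow> bounded_holomorphic_on (\<lambda>z. \<Sum>i\<in>A. f i z) S"
  by (induction A rule: infinite_finite_induct)
    (auto intro: bounded_holomorphic_on_add bounded_holomorphic_on_const)

lemma bounded_holomorphic_on_prod:
  "(\<And>i. i \<in> A \<Longrightarrow> bounded_holomorphic_on (f i) S) \<Longrightarrow> bounded_holomorphic_on (\<lambda>z. \<Prod>i\<in>A. f i z) S"
  by (induction A rule: infinite_finite_induct)
    (auto intro: bounded_holomorphic_on_mult bounded_holomorphic_on_const)

lemma bounded_holomorphic_on_if:
  "bounded_holomorphic_on f S \<Longrightarrow> bounded_holomorphic_on g S \<Longrightarrow>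
     bounded_holomorphic_on (\<lambda>z. if P then f z else g z) S"
  by (cases P) auto

lemmas bounded_holomorphic_on_intros =
  bounded_holomorphic_on_const bounded_holomorphic_on_add bounded_holomorphic_on_diff
  bounded_holomorphic_on_mult bounded_holomorphic_on_sum bounded_holomorphic_on_prod
  bounded_holomorphic_on_if

lemma bounded_holomorphic_on_det:
  assumes "\<And>z. F z \<in> carrier_mat p p"
    and "\<And>i j. i < p \<Longrightarrow> j < p \<Longrightarrow> bounded_holomorphic_on (\<lambda>z. F z $$ (i, j)) S"
  shows "bounded_holomorphic_on (\<lambda>z. det (F z)) S"
proof -
  have "bounded_holomorphic_on
      (\<lambda>z. \<Sum>\<pi>\<in>{\<pi>. \<pi> permutes {0..<p}}. signof \<pi> * (\<Prod>i=0..<p. F z $$ (i, \<pi> i))) S"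
    using assms(2) by (intro bounded_holomorphic_on_intros) (auto dest: permutes_in_image)
  then show ?thesis using det_def'[OF assms(1)] by simp
qed

lemma bounded_holomorphic_on_det_submat:
  assumes "\<And>i j. bounded_holomorphic_on (\<lambda>z. B z i j) S"
  shows "bounded_holomorphic_on (\<lambda>z. det (submat (B z) I J)) S"
proof (cases "length J = length I")
  case True
  then show ?thesis
    using assms by (intro bounded_holomorphic_on_det[where p = "length I"]) (auto simp: submat_def)
next
  case False
  then show ?thesis by (simp add: submat_def det_def bounded_holomorphic_on_const)
qed

lemma bounded_holomorphic_on_cofactor:
  assumes "\<And>z. F z \<in> carrier_mat p p"
    and "\<And>i j. i < p \<Longrightarrow> j < p \<Longrightarrow> bounded_holomorphic_on (\<lambda>z. F z $$ (i, j)) S"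
  shows "bounded_holomorphic_on (\<lambda>z. cofactor (F z) a b) S"
proof -
  have "bounded_holomorphic_on (\<lambda>z. det (mat_delete (F z) a b)) S"
  proof (rule bounded_holomorphic_on_det)
    show "mat_delete (F z) a b \<in> carrier_mat (p - 1) (p - 1)" for z
      using mat_delete_carrier[OF assms(1)] .
    have "dim_row (F z) = p" "dim_col (F z) = p" for z using assms(1)[of z] by auto
    moreover fix i j assume "i < p - 1" "j < p - 1"
    ultimately show "bounded_holomorphic_on (\<lambda>z. mat_delete (F z) a b $$ (i, j)) S"
      using assms(2) by (simp add: mat_delete_def)
  qed
  then show ?thesis
    unfolding cofactor_def by (intro bounded_holomorphic_on_intros)
qed

lemma bounded_holomorphic_on_cofactor_vec:
  assumes "\<And>i j. bounded_holomorphic_on (\<lambda>z. B z i j) S"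
  shows "bounded_holomorphic_on (\<lambda>z. cofactor_vec (B z) I J c j) S"
  unfolding cofactor_vec_def
  by (intro bounded_holomorphic_on_intros bounded_holomorphic_on_det[where p = "length I"])
    (auto simp: assms)

lemma bounded_holomorphic_on_adj_left_inverse:
  assumes "\<And>i j. bounded_holomorphic_on (\<lambda>z. X z i j) S" and "length J = length I"
  shows "bounded_holomorphic_on (\<lambda>z. adj_left_inverse (X z) I J k j) S"
proof -
  have "bounded_holomorphic_on (\<lambda>z. adj_mat (submat (X z) I J) $$ (b', b)) S"
    if "b' < length I" "b < length I" for b' b
  proof -
    have car: "submat (X z) I J \<in> carrier_mat (length I) (length I)" for z
      using assms(2) by (intro submat_carrier) auto
    have "bounded_holomorphic_on (\<lambda>z. cofactor (submat (X z) I J) b b') S"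
      using assms by (intro bounded_holomorphic_on_cofactor[OF car]) (auto simp: submat_def)
    moreover have "dim_row (submat (X z) I J) = length I" "dim_col (submat (X z) I J) = length I" for z
      using assms(2) by (simp_all add: submat_def)
    ultimately show ?thesis using that by (simp add: adj_mat_def)
  qed
  then show ?thesis
    unfolding adj_left_inverse_def using assms(2) by (intro bounded_holomorphic_on_intros) auto
qed

lemma bounded_holomorphic_on_range_defect:
  assumes "\<And>i j. bounded_holomorphic_on (\<lambda>z. X z i j) S" and "length J = length I"
  shows "bounded_holomorphic_on (\<lambda>z. range_defect (X z) I J a j) S"
  unfolding range_defect_def
  using assms by (intro bounded_holomorphic_on_intros bounded_holomorphic_on_adj_left_inverse
      bounded_holomorphic_on_det_submat)

lemma Hinf_imp_bounded_holomorphic_on: "f \<in> Hinf \<Longrightarrow> bounded_holomorphic_on f (ball 0 1)"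
  unfolding Hinf_def bounded_holomorphic_on_def by simp

lemma bounded_holomorphic_on_restrict_H2:
  assumes "bounded_holomorphic_on f (ball 0 1)"
  shows "(\<lambda>z. if z \<in> ball 0 1 then f z else 0) \<in> H2"
proof -
  define g where "g z = (if z \<in> ball 0 1 then f z else 0)" for z
  obtain M where M: "\<And>z. z \<in> ball 0 1 \<Longrightarrow> cmod (f z) \<le> M"
    using assms unfolding bounded_holomorphic_on_def bounded_iff by blast
  have "f holomorphic_on ball 0 1" using assms by (simp add: bounded_holomorphic_on_def)
  then have hol: "g holomorphic_on ball 0 1" by (rule holomorphic_transform) (simp add: g_def)
  have "integral {0..2*pi} (\<lambda>t. (cmod (g (complex_of_real \<rho> * cis t)))\<^sup>2) \<le> M\<^sup>2 * (2*pi - 0)"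
    if "\<rho> \<in> {0<..<1}" for \<rho>
  proof -
    have circle: "complex_of_real \<rho> * cis t \<in> ball 0 1" for t
      using that by (simp add: norm_mult)
    have "continuous_on UNIV (\<lambda>t. complex_of_real \<rho> * cis t)" by (intro continuous_intros)
    then have "continuous_on UNIV (\<lambda>t. g (complex_of_real \<rho> * cis t))"
      by (rule continuous_on_compose2[OF holomorphic_on_imp_continuous_on[OF hol]]) (use circle in blast)
    then have cont: "continuous_on {0..2*pi} (\<lambda>t. (cmod (g (complex_of_real \<rho> * cis t)))\<^sup>2)"
      by (intro continuous_on_power continuous_on_norm) (rule continuous_on_subset, auto)
    have bound: "norm ((cmod (g (complex_of_real \<rho> * cis t)))\<^sup>2) \<le> M\<^sup>2" for t
      using M[OF circle[of t]] circle[of t] by (simp add: g_def power_mono)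
    show ?thesis using integral_bound[OF _ cont bound] by simp
  qed
  moreover have "\<forall>z. z \<notin> ball 0 1 \<longrightarrow> g z = 0" by (simp add: g_def)
  ultimately have "g \<in> H2" unfolding H2_def using hol by blast
  then show ?thesis unfolding g_def[abs_def] .
qed

lemma holomorphic_mult_nonzero_somewhere:
  assumes S: "open S" "connected S" and "f holomorphic_on S" "g holomorphic_on S"
    and "z1 \<in> S" "f z1 \<noteq> 0" and "z2 \<in> S" "g z2 \<noteq> 0"
  shows "\<exists>z\<in>S. f z * g z \<noteq> 0"
proof (rule ccontr)
  assume "\<not> (\<exists>z\<in>S. f z * g z \<noteq> 0)"
  then have fg: "\<And>z. z \<in> S \<Longrightarrow> f z * g z = 0" by blast
  define U where "U = S \<inter> f -` (- {0})"
  have "open U"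
    unfolding U_def using S(1) holomorphic_on_imp_continuous_on[OF assms(3)]
    by (intro continuous_open_preimage) auto
  have "g z2 = 0"
  proof (rule analytic_continuation_open[where f = g and g = "\<lambda>_. 0" and s = U and s' = S])
    show "U \<noteq> {}" using assms(5,6) unfolding U_def by blast
    show "\<And>z. z \<in> U \<Longrightarrow> g z = 0" using fg unfolding U_def by auto
  qed (use \<open>open U\<close> S assms(4,7) in \<open>auto simp: U_def\<close>)
  then show False using assms(8) by simp
qed

lemma holomorphic_prod_nonzero_somewhere:
  assumes S: "open S" "connected S" "S \<noteq> {}"
    and "\<And>i. i \<in> A \<Longrightarrow> f i holomorphic_on S" "\<And>i. i \<in> A \<Longrightarrow> \<exists>z\<in>S. f i z \<noteq> 0"
  shows "\<exists>z\<in>S. (\<Prod>i\<in>A. f i z) \<noteq> 0"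
  using assms(4,5)
proof (induction A rule: infinite_finite_induct)
  case (insert i A)
  obtain z1 where "z1 \<in> S" "(\<Prod>i\<in>A. f i z1) \<noteq> 0" using insert by auto
  moreover obtain z2 where "z2 \<in> S" "f i z2 \<noteq> 0" using insert.prems(2) by blast
  moreover have "(\<lambda>z. \<Prod>i\<in>A. f i z) holomorphic_on S" using insert.prems(1) by (auto intro: holomorphic_intros)
  ultimately have "\<exists>z\<in>S. (\<Prod>i\<in>A. f i z) * f i z \<noteq> 0"
    using holomorphic_mult_nonzero_somewhere[OF S(1,2)] insert.prems(1) by blast
  then show ?case using insert.hyps by (simp add: mult.commute)
qed (use S(3) in auto)

section \<open>Inner matrix functions and the upper bound\<close>

lemma Hinf_mat_bounded_holomorphic_on:
  "\<Theta> \<in> Hinf_mat n m \<Longrightarrow> bounded_holomorphic_on (\<Theta> a k) (ball 0 1)"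
  unfolding Hinf_mat_def
  by (cases "a < n \<and> k < m") (auto intro: Hinf_imp_bounded_holomorphic_on bounded_holomorphic_on_const)

lemma Hinf_mat_outside:
  "\<Theta> \<in> Hinf_mat n m \<Longrightarrow> z \<notin> ball 0 1 \<or> \<not> a < n \<Longrightarrow> \<Theta> a k z = 0"
  unfolding Hinf_mat_def Hinf_def by (cases "a < n \<and> k < m") auto

lemma radial_gram_tendsto:
  assumes "\<forall>i<n. \<forall>j<m. has_radial_limit (\<Theta> i j) t" "j < m" "k < m"
  shows "((\<lambda>\<rho>. \<Sum>i<n. cnj (\<Theta> i j (of_real \<rho> * cis t)) * \<Theta> i k (of_real \<rho> * cis t))
    \<longlongrightarrow> (\<Sum>i<n. cnj (bval (\<Theta> i j) t) * bval (\<Theta> i k) t)) (at_left 1)"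
proof -
  have radial: "((\<lambda>\<rho>. \<Theta> i j (of_real \<rho> * cis t)) \<longlongrightarrow> bval (\<Theta> i j) t) (at_left 1)"
    if ij: "i < n" "j < m" for i j
  proof -
    obtain L where L: "((\<lambda>\<rho>. \<Theta> i j (of_real \<rho> * cis t)) \<longlongrightarrow> L) (at_left 1)"
      using assms(1) ij unfolding has_radial_limit_def by blast
    then have "bval (\<Theta> i j) t = L" unfolding bval_def by (intro tendsto_Lim) auto
    then show ?thesis using L by simp
  qed
  show ?thesis using assms(2,3) by (intro tendsto_sum tendsto_mult tendsto_cnj radial) auto
qed

text \<open>Near a boundary point where \<Theta>^* \<Theta> = 1, the Gram matrix of \<Theta> z is close to the identity.\<close>

lemma inner_mat_injective_somewhere:
  assumes "inner_mat n m \<Theta>"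
  shows "\<exists>z\<in>ball 0 1. \<forall>x. (\<forall>a<n. (\<Sum>k<m. \<Theta> a k z * x k) = 0) \<longrightarrow> (\<forall>k<m. x k = 0)"
proof -
  have "ae_filter lborel \<noteq> (bot :: real filter)" by (simp add: ae_filter_eq_bot_iff)
  then obtain t where t: "\<forall>i<n. \<forall>j<m. has_radial_limit (\<Theta> i j) t"
    "\<forall>j<m. \<forall>k<m. (\<Sum>i<n. cnj (bval (\<Theta> i j) t) * bval (\<Theta> i k) t) = (if j = k then 1 else 0)"
    using eventually_happens'[OF _ assms[unfolded inner_mat_def, THEN conjunct2]] by blast
  define G where "G \<rho> j k = (\<Sum>i<n. cnj (\<Theta> i j (of_real \<rho> * cis t)) * \<Theta> i k (of_real \<rho> * cis t))"
    for \<rho> j k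
  have gram_limit: "((\<lambda>\<rho>. G \<rho> j k) \<longlongrightarrow> (if j = k then 1 else 0)) (at_left 1)"
    if "j < m" "k < m" for j k
    using radial_gram_tendsto[OF t(1) that] t(2) that unfolding G_def by simp
  have "\<forall>\<^sub>F \<rho> in at_left 1. \<forall>p\<in>{..<m} \<times> {..<m}.
      dist (G \<rho> (fst p) (snd p)) (if fst p = snd p then 1 else 0) < 1 / (real m + 1)"
    by (intro eventually_ball_finite ballI tendstoD gram_limit) auto
  moreover have "\<forall>\<^sub>F \<rho> in at_left (1::real). \<rho> \<in> {0<..<1}"
    by (rule eventually_at_left_real) simp
  ultimately have "\<forall>\<^sub>F \<rho> in at_left (1::real). \<rho> \<in> {0<..<1} \<and> (\<forall>p\<in>{..<m} \<times> {..<m}.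
      dist (G \<rho> (fst p) (snd p)) (if fst p = snd p then 1 else 0) < 1 / (real m + 1))"
    by (simp add: eventually_conj_iff)
  then obtain \<rho> where \<rho>: "\<rho> \<in> {0<..<1}" and near: "\<forall>p\<in>{..<m} \<times> {..<m}.
      dist (G \<rho> (fst p) (snd p)) (if fst p = snd p then 1 else 0) < 1 / (real m + 1)"
    using eventually_happens' trivial_limit_at_left_real by blast
  have "\<forall>k<m. x k = 0" if kernel: "\<forall>a<n. (\<Sum>k<m. \<Theta> a k (of_real \<rho> * cis t) * x k) = 0" for x
  proof (rule injective_if_gram_near_identity[OF _ _ kernel])
    fix j k assume "j < m" "k < m"
    then show "cmod ((\<Sum>a<n. cnj (\<Theta> a j (of_real \<rho> * cis t)) * \<Theta> a k (of_real \<rho> * cis t))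
        - (if j = k then 1 else 0)) \<le> 1 / (real m + 1)"
      using near[rule_format, of "(j, k)"] by (simp add: G_def dist_norm)
  qed (simp add: field_simps)
  moreover have "of_real \<rho> * cis t \<in> ball 0 1" using \<rho> by (simp add: norm_mult)
  ultimately show ?thesis by blast
qed

lemma unit_H2vec:
  assumes "j < l"
  shows "(\<lambda>k z. if k = j \<and> z \<in> ball 0 1 then 1 else 0) \<in> H2vec l"
proof -
  have one: "(\<lambda>z. if z \<in> ball 0 1 then 1 else 0) \<in> H2"
    by (rule bounded_holomorphic_on_restrict_H2[OF bounded_holomorphic_on_const])
  have zero: "(\<lambda>z. 0) \<in> H2"
    using bounded_holomorphic_on_restrict_H2[OF bounded_holomorphic_on_const, of 0] by simp
  have "(\<lambda>z. if k = j \<and> z \<in> ball 0 1 then 1 else 0) \<in> H2" for k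
    using one zero by (cases "k = j") simp_all
  then show ?thesis unfolding H2vec_def using assms by auto
qed

lemma mat_range_subset_imp_le:
  assumes "inner_mat n l \<Theta>" and sub: "mat_range l \<Theta> \<subseteq> mat_range m \<Psi>"
  shows "l \<le> m"
proof -
  obtain z where z: "z \<in> ball 0 1"
    and inj: "\<And>x. \<forall>a<n. (\<Sum>k<l. \<Theta> a k z * x k) = 0 \<Longrightarrow> \<forall>k<l. x k = 0"
    using inner_mat_injective_somewhere[OF assms(1)] by blast
  have "\<exists>g. \<forall>a. \<Theta> a j z = (\<Sum>k<m. \<Psi> a k z * g k)" if "j < l" for j
  proof -
    let ?e = "\<lambda>k z. if k = j \<and> z \<in> ball 0 1 then 1 else (0::complex)"
    have "(\<lambda>a z. \<Sum>k<l. \<Theta> a k z * ?e k z) \<in> mat_range m \<Psi>"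
      using sub unit_H2vec[OF that] unfolding mat_range_def by blast
    then obtain G where "(\<lambda>a z. \<Sum>k<l. \<Theta> a k z * ?e k z) = (\<lambda>a z. \<Sum>k<m. \<Psi> a k z * G k z)"
      unfolding mat_range_def by blast
    then have "(\<Sum>k<l. \<Theta> a k z * ?e k z) = (\<Sum>k<m. \<Psi> a k z * G k z)" for a
      by (rule fun_cong[OF fun_cong])
    moreover have "(\<Sum>k<l. \<Theta> a k z * ?e k z) = \<Theta> a j z" for a
      using that z by (simp add: mult_delta_right)
    ultimately show ?thesis by (intro exI[of _ "\<lambda>k. G k z"]) simp
  qed
  then have "\<forall>j\<in>{..<l}. \<exists>g. \<forall>a. \<Theta> a j z = (\<Sum>k<m. \<Psi> a k z * g k)" by blast
  then obtain g where g: "\<forall>j\<in>{..<l}. \<forall>a. \<Theta> a j z = (\<Sum>k<m. \<Psi> a k z * g j k)"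
    by (rule bchoice[THEN exE])
  have "card {..<l} \<le> card {..<m}"
  proof (rule card_le_if_independent_in_span[where u = "\<lambda>j a. \<Theta> a j z"])
    fix y assume "\<And>a. (\<Sum>j<l. y j * \<Theta> a j z) = 0"
    then show "\<forall>j\<in>{..<l}. y j = 0" using inj[of y] by (simp add: mult.commute)
  qed (simp_all add: g)
  then show ?thesis by simp
qed

section \<open>The lower bound\<close>

locale inner_family =
  fixes r n :: nat and m :: "nat \<Rightarrow> nat" and \<Theta>s :: "nat \<Rightarrow> matfun"
    and Is Js :: "nat \<Rightarrow> nat list"
  assumes inner: "\<And>i. i < r \<Longrightarrow> inner_mat n (m i) (\<Theta>s i)"
    and selection: "\<And>i. i < r \<Longrightarrow> square_selection {..<n} (m i) (Is i) (Js i) \<and> length (Is i) = m i"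
    and minor_nonzero:
      "\<And>i. i < r \<Longrightarrow> \<exists>z\<in>ball 0 1. det (submat (\<lambda>a k. \<Theta>s i a k z) (Is i) (Js i)) \<noteq> 0"
begin

definition D :: "nat \<Rightarrow> complex \<Rightarrow> complex" where
  "D i z = det (submat (\<lambda>a k. \<Theta>s i a k z) (Is i) (Js i))"

definition L :: "nat \<Rightarrow> nat \<Rightarrow> nat \<Rightarrow> complex \<Rightarrow> complex" where
  "L i k j z = adj_left_inverse (\<lambda>a k. \<Theta>s i a k z) (Is i) (Js i) k j"

text \<open>The rows of M z, indexed by R, stack the matrices \<Theta>s i z L i z - D i z \<cdot> 1, whose
  kernels are the ranges of \<Theta>s i z wherever D i z \<noteq> 0.\<close>

definition R :: "(nat \<times> nat) set" where
  "R = {..<r} \<times> {..<n}"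

definition M :: "nat \<times> nat \<Rightarrow> nat \<Rightarrow> complex \<Rightarrow> complex" where
  "M \<rho> j z = (if fst \<rho> < r then
     range_defect (\<lambda>a k. \<Theta>s (fst \<rho>) a k z) (Is (fst \<rho>)) (Js (fst \<rho>)) (snd \<rho>) j else 0)"

definition U :: "complex set" where
  "U = {z \<in> ball 0 1. (\<Prod>i<r. D i z) \<noteq> 0}"

lemma selection_length: "i < r \<Longrightarrow> length (Js i) = m i"
  using selection by (auto simp: square_selection_def)

lemma bounded_holomorphic_entry: "i < r \<Longrightarrow> bounded_holomorphic_on (\<Theta>s i a k) (ball 0 1)"
  using inner by (auto simp: inner_mat_def intro: Hinf_mat_bounded_holomorphic_on)

lemma bounded_holomorphic_D: "i < r \<Longrightarrow> bounded_holomorphic_on (D i) (ball 0 1)"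
  unfolding D_def[abs_def] by (intro bounded_holomorphic_on_det_submat bounded_holomorphic_entry)

lemma bounded_holomorphic_L: "i < r \<Longrightarrow> bounded_holomorphic_on (L i k j) (ball 0 1)"
  unfolding L_def[abs_def]
  by (intro bounded_holomorphic_on_adj_left_inverse bounded_holomorphic_entry)
    (simp_all add: selection_length selection)

lemma bounded_holomorphic_M: "bounded_holomorphic_on (M \<rho> j) (ball 0 1)"
proof (cases "fst \<rho> < r")
  case True
  have "bounded_holomorphic_on
      (\<lambda>z. range_defect (\<lambda>a k. \<Theta>s (fst \<rho>) a k z) (Is (fst \<rho>)) (Js (fst \<rho>)) (snd \<rho>) j) (ball 0 1)"
    using True selection[OF True]
    by (intro bounded_holomorphic_on_range_defect bounded_holomorphic_entry) (simp_all add: selection_length)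
  then show ?thesis unfolding M_def[abs_def] using True by simp
qed (simp add: M_def[abs_def] bounded_holomorphic_on_const)

lemma U_subset: "U \<subseteq> ball 0 1"
  unfolding U_def by auto

lemma open_U: "open U"
proof -
  have "continuous_on (ball 0 1) (\<lambda>z. \<Prod>i<r. D i z)"
    using bounded_holomorphic_D
    by (intro holomorphic_on_imp_continuous_on holomorphic_on_prod) (auto simp: bounded_holomorphic_on_def)
  then have "open (ball 0 1 \<inter> (\<lambda>z. \<Prod>i<r. D i z) -` (- {0}))"
    by (intro continuous_open_preimage) auto
  moreover have "ball 0 1 \<inter> (\<lambda>z. \<Prod>i<r. D i z) -` (- {0}) = U" unfolding U_def by auto
  ultimately show ?thesis by simp
qed

lemma U_nonempty: "U \<noteq> {}"
proof -
  have "\<exists>z\<in>ball 0 1. D i z \<noteq> 0" if "i < r" for i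
    using minor_nonzero[OF that] by (simp add: D_def)
  then have "\<exists>z\<in>ball 0 1. (\<Prod>i\<in>{..<r}. D i z) \<noteq> 0"
    using bounded_holomorphic_D
    by (intro holomorphic_prod_nonzero_somewhere) (auto simp: bounded_holomorphic_on_def)
  then show ?thesis unfolding U_def by auto
qed

lemma D_nonzero: "z \<in> U \<Longrightarrow> i < r \<Longrightarrow> D i z \<noteq> 0"
  unfolding U_def by auto

lemma M_mult_range:
  assumes "i < r" "a < n"
  shows "(\<Sum>j<n. M (i, a) j z * (\<Sum>k<m i. \<Theta>s i j k z * x k)) = 0"
  unfolding M_def using assms by (simp add: range_defect_mult_range selection)

lemma M_kernel:
  assumes "i < r" "a < n" and "(\<Sum>j<n. M (i, a) j z * w j) = 0"
  shows "(\<Sum>k<m i. \<Theta>s i a k z * (\<Sum>j<n. L i k j z * w j)) = D i z * w a"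
  using range_defect_kernel[of a n "\<lambda>a k. \<Theta>s i a k z" "Is i" "Js i" w] assms
  by (simp add: M_def L_def D_def selection_length)

lemma injective_on_U:
  assumes "z \<in> U" "i < r" "\<forall>a<n. (\<Sum>k<m i. \<Theta>s i a k z * x k) = 0"
  shows "\<forall>k<m i. x k = 0"
  using adj_left_inverse_injective[of n "m i" "Is i" "Js i" "\<lambda>a k. \<Theta>s i a k z"] selection D_nonzero assms
  by (simp add: D_def)

lemma rank_bound:
  assumes "0 < r" "z0 \<in> U" and IJ: "nonsingular_submat (\<lambda>\<rho> j. M \<rho> j z0) R n I J"
  shows "length I + (\<Sum>i<r. m i) \<le> r * n"
proof (rule ccontr)
  assume contra: "\<not> length I + (\<Sum>i<r. m i) \<le> r * n"
  define C where "C = {..<n} - set J"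
  have sel: "distinct J" "length J = length I" "set J \<subseteq> {..<n}"
    using IJ by (auto simp: nonsingular_submat_def square_selection_def)
  have "length I \<le> n"
    using IJ by (auto simp: nonsingular_submat_def dest: square_selection_length_le)
  have "card C = n - length I"
    unfolding C_def using sel by (simp add: card_Diff_subset distinct_card)
  moreover obtain r' where "r = Suc r'" using \<open>0 < r\<close> gr0_implies_Suc by blast
  ultimately have dim: "card C + (r - 1) * n < (\<Sum>i<r. m i)"
    using contra \<open>length I \<le> n\<close> by simp
  have "C \<subseteq> {..<n}" unfolding C_def by auto
  from common_range_vector[where T = "\<lambda>i a k. \<Theta>s i a k z0",
      OF \<open>0 < r\<close> injective_on_U[OF \<open>z0 \<in> U\<close>] this dim]
  obtain v where v: "\<exists>a<n. v a \<noteq> 0" "\<forall>a\<in>C. v a = 0"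
    and in_ranges: "\<forall>i<r. \<exists>x. \<forall>a<n. v a = (\<Sum>k<m i. \<Theta>s i a k z0 * x k)"
    by blast
  have "(\<Sum>j<n. M \<rho> j z0 * v j) = 0" if \<rho>R: "\<rho> \<in> R" for \<rho>
  proof -
    obtain i a where \<rho>: "\<rho> = (i, a)" "i < r" "a < n" using \<rho>R unfolding R_def by auto
    then obtain x where "\<forall>a<n. v a = (\<Sum>k<m i. \<Theta>s i a k z0 * x k)" using in_ranges by blast
    then have "(\<Sum>j<n. M \<rho> j z0 * v j) = (\<Sum>j<n. M (i, a) j z0 * (\<Sum>k<m i. \<Theta>s i j k z0 * x k))"
      unfolding \<rho>(1) by (intro sum.cong refl) simp
    also have "\<dots> = 0" using M_mult_range[OF \<rho>(2,3)] .
    finally show ?thesis .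
  qed
  moreover have "v a = 0" if "a < n" "a \<notin> set J" for a
    using v(2) that unfolding C_def by blast
  ultimately have "\<forall>a<n. v a = 0"
    by (intro nonsingular_submat_kernel_trivial[OF IJ]) blast+
  then show False using v(1) by blast
qed

lemma prod_D_split: "i < r \<Longrightarrow> (\<Prod>i<r. D i z) = D i z * (\<Prod>i'\<in>{..<r} - {i}. D i' z)"
  by (subst prod.remove[of _ i]) auto

lemma bounded_holomorphic_cofactor_vec_M:
  "bounded_holomorphic_on (\<lambda>z. cofactor_vec (\<lambda>\<rho> j. M \<rho> j z) I J c j) (ball 0 1)"
  by (intro bounded_holomorphic_on_cofactor_vec bounded_holomorphic_M)

text \<open>By maximality the cofactor vectors lie in the kernel of M z for every z \<in> U, so there
  they are \<Theta>s i z times an explicit vector with denominator D i z; analytic continuation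
  extends the cleared identity to the whole disc.\<close>

lemma prod_D_mult_cofactor_vec:
  assumes sel: "square_selection R n I J" and c: "c < n" "c \<notin> set J" and "i < r"
    and maximal: "\<And>z I' J'. z \<in> U \<Longrightarrow> nonsingular_submat (\<lambda>\<rho> j. M \<rho> j z) R n I' J' \<Longrightarrow>
        length I' \<le> length I"
    and "z \<in> ball 0 1" "a < n"
  shows "(\<Prod>i<r. D i z) * cofactor_vec (\<lambda>\<rho> j. M \<rho> j z) I J c a
    = (\<Prod>i'\<in>{..<r} - {i}. D i' z) *
      (\<Sum>k<m i. \<Theta>s i a k z * (\<Sum>j<n. L i k j z * cofactor_vec (\<lambda>\<rho> j. M \<rho> j z) I J c j))"
    (is "?lhs z = ?rhs z")
proof (rule analytic_continuation_open[where s = U and s' = "ball 0 1" and f = ?lhs and g = ?rhs])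
  show "?lhs holomorphic_on ball 0 1" "?rhs holomorphic_on ball 0 1"
    using bounded_holomorphic_D bounded_holomorphic_L[OF \<open>i < r\<close>] bounded_holomorphic_entry[OF \<open>i < r\<close>]
      bounded_holomorphic_cofactor_vec_M
    by (auto simp: bounded_holomorphic_on_def intro!: holomorphic_intros)
  show "?lhs z = ?rhs z" if "z \<in> U" for z
  proof -
    have "(i, a) \<in> R" using \<open>i < r\<close> \<open>a < n\<close> unfolding R_def by simp
    have "(\<Sum>j<n. M (i, a) j z * cofactor_vec (\<lambda>\<rho> j. M \<rho> j z) I J c j) = 0"
      using sel c \<open>(i, a) \<in> R\<close> maximal[OF that] by (rule cofactor_vec_in_kernel)
    then show ?thesis
      using M_kernel[OF \<open>i < r\<close> \<open>a < n\<close>] prod_D_split[OF \<open>i < r\<close>] by simp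
  qed
qed (use open_U U_nonempty U_subset \<open>z \<in> ball 0 1\<close> in auto)

lemma scaled_cofactor_vec_in_range:
  assumes sel: "square_selection R n I J" and c: "c < n" "c \<notin> set J" and "i < r"
    and maximal: "\<And>z I' J'. z \<in> U \<Longrightarrow> nonsingular_submat (\<lambda>\<rho> j. M \<rho> j z) R n I' J' \<Longrightarrow>
        length I' \<le> length I"
  shows "(\<lambda>a z. if a < n \<and> z \<in> ball 0 1 then
      (\<Prod>i<r. D i z) * cofactor_vec (\<lambda>\<rho> j. M \<rho> j z) I J c a else 0) \<in> mat_range (m i) (\<Theta>s i)"
proof -
  define G where "G k z = (\<Prod>i'\<in>{..<r} - {i}. D i' z) *
      (\<Sum>j<n. L i k j z * cofactor_vec (\<lambda>\<rho> j. M \<rho> j z) I J c j)" for k z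
  define H where "H k z = (if k < m i \<and> z \<in> ball 0 1 then G k z else 0)" for k z
  have "bounded_holomorphic_on (G k) (ball 0 1)" for k
    unfolding G_def[abs_def]
    using bounded_holomorphic_D bounded_holomorphic_L[OF \<open>i < r\<close>] bounded_holomorphic_cofactor_vec_M
    by (intro bounded_holomorphic_on_intros) auto
  then have "H \<in> H2vec (m i)"
    unfolding H2vec_def H_def[abs_def] using bounded_holomorphic_on_restrict_H2 by auto
  moreover have "(if a < n \<and> z \<in> ball 0 1 then
      (\<Prod>i<r. D i z) * cofactor_vec (\<lambda>\<rho> j. M \<rho> j z) I J c a else 0)
      = (\<Sum>k<m i. \<Theta>s i a k z * H k z)" for a z
  proof (cases "a < n \<and> z \<in> ball 0 1")
    case True
    then show ?thesis
      using prod_D_mult_cofactor_vec[OF sel c \<open>i < r\<close> maximal]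
      by (simp add: H_def G_def sum_distrib_left mult_ac)
  next
    case False
    then have "\<Theta>s i a k z = 0" for k
      using inner[OF \<open>i < r\<close>] by (auto simp: inner_mat_def intro: Hinf_mat_outside)
    then show ?thesis by (subst if_not_P[OF False]) simp
  qed
  ultimately show ?thesis
    unfolding mat_range_def by blast
qed

lemma width_bound:
  assumes "z0 \<in> U" and IJ: "nonsingular_submat (\<lambda>\<rho> j. M \<rho> j z0) R n I J"
    and maximal: "\<And>z I' J'. z \<in> U \<Longrightarrow> nonsingular_submat (\<lambda>\<rho> j. M \<rho> j z) R n I' J' \<Longrightarrow>
        length I' \<le> length I"
    and sub: "(\<Inter>i<r. mat_range (m i) (\<Theta>s i)) \<subseteq> mat_range l \<Theta>"
  shows "n - length I \<le> l"
proof -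
  define C where "C = {..<n} - set J"
  define F where "F c a z = (if a < n \<and> z \<in> ball 0 1 then
      (\<Prod>i<r. D i z) * cofactor_vec (\<lambda>\<rho> j. M \<rho> j z) I J c a else 0)" for c a z
  have sel: "square_selection R n I J" and det: "det (submat (\<lambda>\<rho> j. M \<rho> j z0) I J) \<noteq> 0"
    using IJ by (simp_all add: nonsingular_submat_def)
  then have J: "distinct J" "length J = length I" "set J \<subseteq> {..<n}"
    by (simp_all add: square_selection_def)
  have "F c \<in> mat_range (m i) (\<Theta>s i)" if "c \<in> C" "i < r" for c i
  proof -
    have "c < n" "c \<notin> set J" using that(1) unfolding C_def by auto
    show ?thesis
      using sel \<open>c < n\<close> \<open>c \<notin> set J\<close> \<open>i < r\<close> maximal
      unfolding F_def[abs_def] by (rule scaled_cofactor_vec_in_range)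
  qed
  then have "F c \<in> mat_range l \<Theta>" if "c \<in> C" for c
    using sub that by blast
  then have "\<forall>c\<in>C. \<exists>H. F c = (\<lambda>a z. \<Sum>k<l. \<Theta> a k z * H k z)"
    unfolding mat_range_def by blast
  then obtain H where H: "\<forall>c\<in>C. F c = (\<lambda>a z. \<Sum>k<l. \<Theta> a k z * H c k z)"
    by (rule bchoice[THEN exE])
  have diagonal: "F c c' z0 = (if c = c' then (\<Prod>i<r. D i z0) * det (submat (\<lambda>\<rho> j. M \<rho> j z0) I J) else 0)"
    if "c \<in> C" "c' \<in> C" for c c'
    using that \<open>z0 \<in> U\<close> U_subset J(2)
    by (auto simp: F_def C_def cofactor_vec_border cofactor_vec_outside)
  have "card C \<le> card {..<l}"
  proof (rule card_le_if_independent_in_span[where u = "\<lambda>c a. F c a z0"])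
    show "F c a z0 = (\<Sum>k\<in>{..<l}. \<Theta> a k z0 * H c k z0)" if "c \<in> C" for c a
      using H that by simp
    fix y assume indep: "\<And>a. (\<Sum>c\<in>C. y c * F c a z0) = 0"
    show "\<forall>c\<in>C. y c = 0"
    proof
      fix c' assume "c' \<in> C"
      have "(\<Sum>c\<in>C. y c * F c c' z0) = y c' * ((\<Prod>i<r. D i z0) * det (submat (\<lambda>\<rho> j. M \<rho> j z0) I J))"
        using \<open>c' \<in> C\<close> diagonal by (simp add: mult_delta_right C_def)
      then show "y c' = 0"
        using indep[of c'] det D_nonzero[OF \<open>z0 \<in> U\<close>] by simp
    qed
  qed (simp_all add: C_def)
  moreover have "card C = n - length I"
    unfolding C_def using J by (simp add: card_Diff_subset distinct_card)
  ultimately show ?thesis by simp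
qed

lemma lower_bound:
  assumes "0 < r" and sub: "(\<Inter>i<r. mat_range (m i) (\<Theta>s i)) \<subseteq> mat_range l \<Theta>"
  shows "int n - (\<Sum>i<r. int n - int (m i)) \<le> int l"
proof -
  let ?P = "\<lambda>q. \<exists>z\<in>U. \<exists>I J. nonsingular_submat (\<lambda>\<rho> j. M \<rho> j z) R n I J \<and> length I = q"
  have "nonsingular_submat B R n [] []" for B :: "nat \<times> nat \<Rightarrow> nat \<Rightarrow> complex"
    by (simp add: nonsingular_submat_def square_selection_def det_submat_Nil)
  then have "?P 0" using U_nonempty by blast
  moreover have "\<forall>q. ?P q \<longrightarrow> q \<le> n"
    unfolding nonsingular_submat_def using square_selection_length_le by blast
  ultimately have "\<exists>q. ?P q \<and> (\<forall>q'. ?P q' \<longrightarrow> q' \<le> q)"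
    by (rule Nat.ex_has_greatest_nat)
  then obtain q where q: "?P q" and q_max: "\<forall>q'. ?P q' \<longrightarrow> q' \<le> q" by blast
  then obtain z0 I J where z0: "z0 \<in> U" and IJ: "nonsingular_submat (\<lambda>\<rho> j. M \<rho> j z0) R n I J"
    and "length I = q"
    by blast
  have maximal: "length I' \<le> length I"
    if "z \<in> U" "nonsingular_submat (\<lambda>\<rho> j. M \<rho> j z) R n I' J'" for z I' J'
    using q_max that \<open>length I = q\<close> by blast
  have "length I \<le> n"
    using IJ by (auto simp: nonsingular_submat_def dest: square_selection_length_le)
  moreover have "length I + (\<Sum>i<r. m i) \<le> r * n" by (rule rank_bound[OF \<open>0 < r\<close> z0 IJ])
  moreover have "n - length I \<le> l" by (rule width_bound[OF z0 IJ maximal sub])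
  ultimately show ?thesis
    by (simp add: sum_subtractf of_nat_diff flip: of_nat_sum of_nat_mult)
qed

end

lemma inner_mat_nonsingular_submat:
  assumes "inner_mat n m \<Theta>"
  shows "\<exists>I J. square_selection {..<n} m I J \<and> length I = m \<and>
    (\<exists>z\<in>ball 0 1. det (submat (\<lambda>a k. \<Theta> a k z) I J) \<noteq> 0)"
proof -
  obtain z where z: "z \<in> ball 0 1"
    and inj: "\<And>x. \<forall>a<n. (\<Sum>k<m. \<Theta> a k z * x k) = 0 \<Longrightarrow> \<forall>k<m. x k = 0"
    using inner_mat_injective_somewhere[OF assms] by blast
  have "\<exists>I J. nonsingular_submat (\<lambda>a k. \<Theta> a k z) {..<n} m I J \<and> length I = m"
    using inj by (intro injective_imp_nonsingular_submat) simp
  then show ?thesis using z unfolding nonsingular_submat_def by blast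
qed

theorem lcm_lower_bound:
  fixes r n l :: nat and m :: "nat \<Rightarrow> nat" and \<Theta>s :: "nat \<Rightarrow> matfun" and \<Theta> :: matfun
  assumes "0 < r" and inner: "\<forall>i<r. inner_mat n (m i) (\<Theta>s i)"
    and sub: "(\<Inter>i<r. mat_range (m i) (\<Theta>s i)) \<subseteq> mat_range l \<Theta>"
  shows "int n - (\<Sum>i<r. int n - int (m i)) \<le> int l"
proof -
  have "\<forall>i\<in>{..<r}. \<exists>IJ. square_selection {..<n} (m i) (fst IJ) (snd IJ) \<and> length (fst IJ) = m i \<and>
      (\<exists>z\<in>ball 0 1. det (submat (\<lambda>a k. \<Theta>s i a k z) (fst IJ) (snd IJ)) \<noteq> 0)"
    using inner inner_mat_nonsingular_submat by fastforce
  then obtain IJ where IJ: "\<forall>i\<in>{..<r}. square_selection {..<n} (m i) (fst (IJ i)) (snd (IJ i)) \<and>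
      length (fst (IJ i)) = m i \<and>
      (\<exists>z\<in>ball 0 1. det (submat (\<lambda>a k. \<Theta>s i a k z) (fst (IJ i)) (snd (IJ i))) \<noteq> 0)"
    by (rule bchoice[THEN exE])
  interpret inner_family r n m \<Theta>s "\<lambda>i. fst (IJ i)" "\<lambda>i. snd (IJ i)"
    using inner IJ by unfold_locales auto
  show ?thesis by (rule lower_bound[OF \<open>0 < r\<close> sub])
qed

theorem mainTheorem6:
  fixes r n l :: nat and m :: "nat \<Rightarrow> nat" and \<Theta>s :: "nat \<Rightarrow> matfun" and \<Theta> :: matfun
  assumes "r \<ge> 1"
    and "\<forall>i<r. inner_mat n (m i) (\<Theta>s i)"
    and "inner_mat n l \<Theta>"
    and "(\<Inter>i<r. mat_range (m i) (\<Theta>s i)) = mat_range l \<Theta>"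
  shows "int n - (\<Sum>i<r. int n - int (m i)) \<le> int l \<and> l \<le> Min (m ` {..<r})"
proof
  show "int n - (\<Sum>i<r. int n - int (m i)) \<le> int l"
    using assms(1,2,4) by (intro lcm_lower_bound) auto
  have "l \<le> m i" if "i < r" for i
    using assms(4) that by (intro mat_range_subset_imp_le[OF assms(3)]) blast
  moreover have "0 \<in> {..<r}" using assms(1) by simp
  ultimately show "l \<le> Min (m ` {..<r})"
    by (subst Min_ge_iff) auto
qed

end
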